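(* Let $f,g_1,\dots,g_m,h_1,\dots,h_l\in\mathbb{R}[\mathbf{x}]$ and suppose the following holds: there is a nonnegative integer $r\le m/2$, reals $\overline R_i>\underline R_i>0$ and sets $T_i\subseteq[n]$ for $i\in[r]$, and reals $\overline R_j>0$ and sets $T_j\subseteq[n]$ for $j\in[m]\setminus[2r]$, such that (1) $(\bigcup_{i\in[r]}T_i)\cup(\bigcup_{j\in[m]\setminus[2r]}T_j)=[n]$; (2) $g_i=\|\mathbf{x}(T_i)\|_2^2-\underline R_i$ and $g_{i+r}=\overline R_i-\|\mathbf{x}(T_i)\|_2^2$ for $i\in[r]$; (3) $g_j=\overline R_j-\|\mathbf{x}(T_j)\|_2^2$ for $j\in[m]\setminus[2r]$. Then the linear program $(\mathrm{LP}_k)$ has a feasible solution for every integer $k\ge k_{\min}$, and therefore the POP of minimizing $f$ over $S(g)\cap V(h)$ has the constant trace property.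
   Context: $\mathbf{x}=(x_1,\dots,x_n)$, and for $T\subseteq[n]$, $\mathbf{x}(T)=(x_t)_{t\in T}$. $\lceil p\rceil:=\lceil\deg(p)/2\rceil$; $\mathbb{N}^n_d:=\{\alpha\in\mathbb{N}^n:|\alpha|\le d\}$; $s(d):=\binom{n+d}{n}$; $\mathbf{v}_d=(\mathbf{x}^\alpha)_{\alpha\in\mathbb{N}^n_d}$; $S(g)=\{\mathbf{x}:g_i(\mathbf{x})\ge0\ \forall i\}$, $V(h)=\{\mathbf{x}:h_j(\mathbf{x})=0\ \forall j\}$; $k_{\min}:=\max\{\lceil f\rceil,\lceil g_i\rceil,\lceil h_j\rceil\}$. $(\mathrm{LP}_k)$: minimize $\xi$ over $\xi\in\mathbb{R}$, real diagonal $\mathbf{G}_0$ of size $s(k)$, real diagonal $\mathbf{G}_i$ of size $s(k-\lceil g_i\rceil)$, vectors $\mathbf{u}_j\in\mathbb{R}^{s(2(k-\lceil h_j\rceil))}$, subject to $\mathbf{G}_i-\mathbf{I}\succeq0$ ($i\in\{0\}\cup[m]$) and the polynomial identity $\xi=\mathbf{v}_k^\top\mathbf{G}_0\mathbf{v}_k+\sum_{i\in[m]}g_i\mathbf{v}_{k-\lceil g_i\rceil}^\top\mathbf{G}_i\mathbf{v}_{k-\lceil g_i\rceil}+\sum_{j\in[l]}h_j\mathbf{v}_{2(k-\lceil h_j\rceil)}^\top\mathbf{u}_j$. Constant trace property (CTP): for every integer $k\ge k_{\min}$ there exist $a_k>0$ and a positive definite block-diagonal $\mathbf{P}_k=\mathrm{diag}(\mathbf{P}_{k,0},\dots,\mathbf{P}_{k,m})$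 (blocks of sizes $s(k),s(k-\lceil g_1\rceil),\dots,s(k-\lceil g_m\rceil)$) such that every $\mathbf{y}=(y_\alpha)_{\alpha\in\mathbb{N}^n_{2k}}$ with $\mathbf{M}_{k-\lceil h_j\rceil}(h_j\mathbf{y})=0$ ($j\in[l]$) and $y_{\mathbf{0}}=1$ satisfies $\mathrm{trace}(\mathbf{P}_k\mathbf{D}_k(\mathbf{y})\mathbf{P}_k)=a_k$, where $\mathbf{D}_k(\mathbf{y})=\mathrm{diag}(\mathbf{M}_k(\mathbf{y}),\mathbf{M}_{k-\lceil g_1\rceil}(g_1\mathbf{y}),\dots,\mathbf{M}_{k-\lceil g_m\rceil}(g_m\mathbf{y}))$, $\mathbf{M}_d(\mathbf{y})=(y_{\alpha+\beta})_{\alpha,\beta\in\mathbb{N}^n_d}$, $\mathbf{M}_d(q\mathbf{y})=(\sum_\gamma q_\gamma y_{\alpha+\beta+\gamma})_{\alpha,\beta\in\mathbb{N}^n_d}$. *)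

theory Defs
  imports "HOL-Analysis.Analysis" "HOL-Library.Poly_Mapping"
begin

(* Variable x_t corresponds to key t (1-based, t \<in> {1..n}). *)
type_synonym monom = "nat \<Rightarrow>\<^sub>0 nat"
type_synonym mpoly = "monom \<Rightarrow>\<^sub>0 real"

definition mdeg :: "monom \<Rightarrow> nat" where
  "mdeg \<alpha> = (\<Sum>t\<in>Poly_Mapping.keys \<alpha>. Poly_Mapping.lookup \<alpha> t)"

definition pdeg :: "mpoly \<Rightarrow> nat" where
  "pdeg p = Max (insert 0 (mdeg ` Poly_Mapping.keys p))"

definition pceil :: "mpoly \<Rightarrow> nat" where
  "pceil p = (pdeg p + 1) div 2"

definition Nset :: "nat \<Rightarrow> nat \<Rightarrow> monom set" where
  "Nset n d = {\<alpha>. Poly_Mapping.keys \<alpha> \<subseteq> {1..n} \<and> mdeg \<alpha> \<le> d}"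

definition Xm :: "monom \<Rightarrow> mpoly" where
  "Xm \<alpha> = Poly_Mapping.single \<alpha> 1"

definition pconst :: "real \<Rightarrow> mpoly" where
  "pconst c = Poly_Mapping.single 0 c"

definition in_vars :: "nat \<Rightarrow> mpoly \<Rightarrow> bool" where
  "in_vars n p \<longleftrightarrow> (\<forall>\<alpha>\<in>Poly_Mapping.keys p. Poly_Mapping.keys \<alpha> \<subseteq> {1..n})"

definition sqnorm :: "nat set \<Rightarrow> mpoly" where
  "sqnorm T = (\<Sum>t\<in>T. Xm (Poly_Mapping.single t 2))"

(* g_0 := 1 (used for the moment-matrix block), g_i otherwise *)
definition gg :: "(nat \<Rightarrow> mpoly) \<Rightarrow> nat \<Rightarrow> mpoly" where
  "gg g i = (if i = 0 then 1 else g i)"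

(* matrices indexed by a finite index set I, as functions I \<times> I \<Rightarrow> real *)
definition diag_on :: "'i set \<Rightarrow> ('i \<Rightarrow> 'i \<Rightarrow> real) \<Rightarrow> bool" where
  "diag_on I M \<longleftrightarrow> (\<forall>a\<in>I. \<forall>b\<in>I. a \<noteq> b \<longrightarrow> M a b = 0)"

definition psd_on :: "'i set \<Rightarrow> ('i \<Rightarrow> 'i \<Rightarrow> real) \<Rightarrow> bool" where
  "psd_on I M \<longleftrightarrow> (\<forall>a\<in>I. \<forall>b\<in>I. M a b = M b a) \<and>
     (\<forall>v. (\<Sum>a\<in>I. \<Sum>b\<in>I. v a * M a b * v b) \<ge> 0)"

definition pd_on :: "'i set \<Rightarrow> ('i \<Rightarrow> 'i \<Rightarrow> real) \<Rightarrow> bool" where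
  "pd_on I M \<longleftrightarrow> (\<forall>a\<in>I. \<forall>b\<in>I. M a b = M b a) \<and>
     (\<forall>v. (\<exists>a\<in>I. v a \<noteq> 0) \<longrightarrow> (\<Sum>a\<in>I. \<Sum>b\<in>I. v a * M a b * v b) > 0)"

definition idm :: "'i \<Rightarrow> 'i \<Rightarrow> real" where
  "idm a b = (if a = b then 1 else 0)"

definition quadpoly :: "nat \<Rightarrow> nat \<Rightarrow> (monom \<Rightarrow> monom \<Rightarrow> real) \<Rightarrow> mpoly" where
  "quadpoly n d G = (\<Sum>\<alpha>\<in>Nset n d. \<Sum>\<beta>\<in>Nset n d. pconst (G \<alpha> \<beta>) * Xm (\<alpha> + \<beta>))"

definition linpoly :: "nat \<Rightarrow> nat \<Rightarrow> (monom \<Rightarrow> real) \<Rightarrow> mpoly" where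
  "linpoly n d u = (\<Sum>\<alpha>\<in>Nset n d. pconst (u \<alpha>) * Xm \<alpha>)"

definition kmin :: "mpoly \<Rightarrow> nat \<Rightarrow> nat \<Rightarrow> (nat \<Rightarrow> mpoly) \<Rightarrow> (nat \<Rightarrow> mpoly) \<Rightarrow> nat" where
  "kmin f m l g h = Max ({pceil f} \<union> pceil ` g ` {1..m} \<union> pceil ` h ` {1..l})"

(* feasibility of (LP_k); block i = 0 is G_0 (size s(k)), blocks i \<in> [m] are G_i *)
definition LP_feasible ::
  "nat \<Rightarrow> nat \<Rightarrow> nat \<Rightarrow> (nat \<Rightarrow> mpoly) \<Rightarrow> (nat \<Rightarrow> mpoly) \<Rightarrow> nat \<Rightarrow> bool" where
  "LP_feasible n m l g h k \<longleftrightarrow>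
     (\<exists>(\<xi>::real) (G :: nat \<Rightarrow> monom \<Rightarrow> monom \<Rightarrow> real) (u :: nat \<Rightarrow> monom \<Rightarrow> real).
        (\<forall>i\<in>{0..m}. diag_on (Nset n (k - pceil (gg g i))) (G i) \<and>
                     psd_on (Nset n (k - pceil (gg g i))) (\<lambda>a b. G i a b - idm a b)) \<and>
        pconst \<xi> = quadpoly n k (G 0)
                   + (\<Sum>i\<in>{1..m}. g i * quadpoly n (k - pceil (g i)) (G i))
                   + (\<Sum>j\<in>{1..l}. h j * linpoly n (2 * (k - pceil (h j))) (u j)))"

(* localizing matrix M_d(q y), entry (alpha,beta); M_d(y) = M_d(1 y) *)
definition Mloc :: "mpoly \<Rightarrow> (monom \<Rightarrow> real) \<Rightarrow> monom \<Rightarrow> monom \<Rightarrow> real" where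
  "Mloc q y \<alpha> \<beta> = (\<Sum>\<gamma>\<in>Poly_Mapping.keys q. Poly_Mapping.lookup q \<gamma> * y (\<alpha> + \<beta> + \<gamma>))"

(* index set of the block-diagonal matrices D_k(y), P_k: pairs (block i, row alpha) *)
definition Jset :: "nat \<Rightarrow> nat \<Rightarrow> (nat \<Rightarrow> mpoly) \<Rightarrow> nat \<Rightarrow> (nat \<times> monom) set" where
  "Jset n m g k = {(i, \<alpha>). i \<le> m \<and> \<alpha> \<in> Nset n (k - pceil (gg g i))}"

definition Dmat :: "(nat \<Rightarrow> mpoly) \<Rightarrow> (monom \<Rightarrow> real) \<Rightarrow> (nat \<times> monom) \<Rightarrow> (nat \<times> monom) \<Rightarrow> real" where
  "Dmat g y a b = (if fst a = fst b then Mloc (gg g (fst a)) y (snd a) (snd b) else 0)"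

definition trace_on :: "'i set \<Rightarrow> ('i \<Rightarrow> 'i \<Rightarrow> real) \<Rightarrow> real" where
  "trace_on I M = (\<Sum>a\<in>I. M a a)"

definition mat_mult_on :: "'i set \<Rightarrow> ('i \<Rightarrow> 'i \<Rightarrow> real) \<Rightarrow> ('i \<Rightarrow> 'i \<Rightarrow> real) \<Rightarrow> ('i \<Rightarrow> 'i \<Rightarrow> real)" where
  "mat_mult_on I A B = (\<lambda>a c. \<Sum>b\<in>I. A a b * B b c)"

definition CTP :: "nat \<Rightarrow> mpoly \<Rightarrow> nat \<Rightarrow> nat \<Rightarrow> (nat \<Rightarrow> mpoly) \<Rightarrow> (nat \<Rightarrow> mpoly) \<Rightarrow> bool" where
  "CTP n f m l g h \<longleftrightarrow>
     (\<forall>k \<ge> kmin f m l g h. \<exists>(a::real) P. a > 0 \<and>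
        (\<forall>x\<in>Jset n m g k. \<forall>z\<in>Jset n m g k. fst x \<noteq> fst z \<longrightarrow> P x z = 0) \<and>
        pd_on (Jset n m g k) P \<and>
        (\<forall>y :: monom \<Rightarrow> real.
           (\<forall>j\<in>{1..l}. \<forall>\<alpha>\<in>Nset n (k - pceil (h j)). \<forall>\<beta>\<in>Nset n (k - pceil (h j)).
               Mloc (h j) y \<alpha> \<beta> = 0) \<and> y 0 = 1 \<longrightarrow>
           trace_on (Jset n m g k)
             (mat_mult_on (Jset n m g k) (mat_mult_on (Jset n m g k) P (Dmat g y)) P) = a))"

end

theory Submission
  imports Defs
begin

(* With diagonal Gram matrices both sides of the identity in (LP_k) only involve even monomials
   x^(2 beta), so it suffices to choose the diagonals of G_1, ..., G_m and read off G_0 coefficientwise.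
   Take the entry of G_i at alpha to be 1 for the inner-annulus constraints ||x(T_i)||^2 - Rlo_i and
   (2 + S)^(k - |alpha|) for the outer constraints Rup_i - ||x(T_i)||^2, where S is the sum of the
   outer radii. For beta <> 0 some variable x_t of x^beta lies in some T_i (the covering condition),
   so the outer constraint contributes -(2 + S)^(k - |beta| + 1) x^(2 beta) through
   x_t^2 x^(2 (beta - e_t)); this beats the constant terms S (2 + S)^(k - |beta|) and the inner
   constraints, leaving a coefficient of at least 1 for G_0. The constant xi is then positive.
   With u_j = 0 this is a feasible point of (LP_k), and P_k = G^(1/2) gives
   trace (P_k D_k(y) P_k) = L_y(xi) = xi, the constant trace property. *)

lemma mdeg_eq_sum_lookup:
  assumes "finite S" "Poly_Mapping.keys \<alpha> \<subseteq> S"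
  shows "mdeg \<alpha> = (\<Sum>t\<in>S. Poly_Mapping.lookup \<alpha> t)"
  unfolding mdeg_def
  by (rule sum.mono_neutral_left) (use assms in \<open>auto simp: in_keys_iff\<close>)

lemma keys_add_monom:
  "Poly_Mapping.keys ((a::monom) + b) = Poly_Mapping.keys a \<union> Poly_Mapping.keys b"
  by (auto simp: in_keys_iff lookup_add)

lemma mdeg_add: "mdeg ((a::monom) + b) = mdeg a + mdeg b"
proof -
  let ?S = "Poly_Mapping.keys a \<union> Poly_Mapping.keys b"
  have "mdeg (a + b) = (\<Sum>t\<in>?S. Poly_Mapping.lookup (a + b) t)"
    by (rule mdeg_eq_sum_lookup) (auto simp: keys_add_monom)
  also have "\<dots> = (\<Sum>t\<in>?S. Poly_Mapping.lookup a t) + (\<Sum>t\<in>?S. Poly_Mapping.lookup b t)"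
    by (simp add: lookup_add sum.distrib)
  also have "\<dots> = mdeg a + mdeg b"
    by (subst (1 2) mdeg_eq_sum_lookup[of ?S]) auto
  finally show ?thesis .
qed

lemma mdeg_single: "mdeg (Poly_Mapping.single t c) = c"
  by (simp add: mdeg_def)

lemma mdeg_zero [simp]: "mdeg 0 = 0"
  by (simp add: mdeg_def)

lemma lookup_le_mdeg: "Poly_Mapping.lookup \<alpha> t \<le> mdeg \<alpha>"
proof (cases "t \<in> Poly_Mapping.keys \<alpha>")
  case True
  then show ?thesis unfolding mdeg_def by (intro member_le_sum) auto
next
  case False
  then show ?thesis by (simp add: in_keys_iff)
qed

lemma mdeg_eq_0_iff: "mdeg \<alpha> = 0 \<longleftrightarrow> \<alpha> = 0"
proof
  assume "mdeg \<alpha> = 0"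
  then show "\<alpha> = 0"
    using lookup_le_mdeg[of \<alpha>] by (intro poly_mapping_eqI) (metis le_zero_eq lookup_zero)
qed simp

lemma monom_double_inj: "(a::monom) + a = b + b \<Longrightarrow> a = b"
  by (rule poly_mapping_eqI) (metis lookup_add mult_2 mult_cancel_left zero_neq_numeral)

lemma single_two_eq:
  "Poly_Mapping.single t (2::nat) = Poly_Mapping.single t 1 + Poly_Mapping.single t 1"
  by (metis one_add_one single_add)

lemma single_add_minus_single:
  assumes "0 < Poly_Mapping.lookup \<beta> t"
  shows "Poly_Mapping.single t 1 + (\<beta> - Poly_Mapping.single t 1) = (\<beta>::monom)"
  using assms by (intro poly_mapping_eqI) (auto simp: lookup_add lookup_minus lookup_single when_def)

lemma single_add_eq_iff:
  "Poly_Mapping.single t 1 + \<alpha> = (\<beta>::monom) \<longleftrightarrow>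
     0 < Poly_Mapping.lookup \<beta> t \<and> \<alpha> = \<beta> - Poly_Mapping.single t 1"
proof
  assume eq: "Poly_Mapping.single t 1 + \<alpha> = \<beta>"
  then have "0 < Poly_Mapping.lookup \<beta> t"
    by (auto simp: lookup_add)
  moreover have "\<alpha> = \<beta> - Poly_Mapping.single t 1"
    using eq by (intro poly_mapping_eqI) (auto simp: lookup_add lookup_minus)
  ultimately show "0 < Poly_Mapping.lookup \<beta> t \<and> \<alpha> = \<beta> - Poly_Mapping.single t 1"
    by simp
qed (use single_add_minus_single in auto)

lemma finite_Nset: "finite (Nset n d)"
proof -
  let ?restr = "\<lambda>\<alpha>. restrict (Poly_Mapping.lookup \<alpha>) {1..n}"
  have "inj_on ?restr (Nset n d)"
  proof (rule inj_onI)
    fix a b assume a: "a \<in> Nset n d" and b: "b \<in> Nset n d" and eq: "?restr a = ?restr b"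
    show "a = b"
    proof (rule poly_mapping_eqI)
      fix t
      show "Poly_Mapping.lookup a t = Poly_Mapping.lookup b t"
      proof (cases "t \<in> {1..n}")
        case True
        then show ?thesis using eq by (metis restrict_apply')
      next
        case False
        then show ?thesis using a b unfolding Nset_def
          by (metis (no_types, lifting) in_keys_iff mem_Collect_eq subsetD)
      qed
    qed
  qed
  moreover have "?restr ` Nset n d \<subseteq> PiE {1..n} (\<lambda>_. {0..d})"
    unfolding Nset_def by (auto intro: le_trans[OF lookup_le_mdeg])
  ultimately show ?thesis
    by (metis finite_PiE finite_atLeastAtMost finite_imageD finite_subset)
qed

lemma zero_in_Nset [simp]: "0 \<in> Nset n d"
  by (simp add: Nset_def)

lemma Nset_mono: "d \<le> e \<Longrightarrow> Nset n d \<subseteq> Nset n e"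
  by (auto simp: Nset_def)

lemma add_in_Nset: "a \<in> Nset n d \<Longrightarrow> b \<in> Nset n e \<Longrightarrow> a + b \<in> Nset n (d + e)"
  by (auto simp: Nset_def mdeg_add keys_add_monom)

lemma minus_single_in_Nset:
  assumes "\<beta> \<in> Nset n k" "0 < Poly_Mapping.lookup \<beta> t"
  shows "\<beta> - Poly_Mapping.single t 1 \<in> Nset n (k - 1)"
    and "mdeg (\<beta> - Poly_Mapping.single t 1) = mdeg \<beta> - 1"
proof -
  have eq: "\<beta> = Poly_Mapping.single t 1 + (\<beta> - Poly_Mapping.single t 1)"
    using single_add_minus_single assms(2) by simp
  then have deg: "mdeg \<beta> = 1 + mdeg (\<beta> - Poly_Mapping.single t 1)"
    by (metis mdeg_add mdeg_single)
  then show "mdeg (\<beta> - Poly_Mapping.single t 1) = mdeg \<beta> - 1"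
    by simp
  have "Poly_Mapping.keys (\<beta> - Poly_Mapping.single t 1) \<subseteq> Poly_Mapping.keys \<beta>"
    using eq keys_add_monom by (metis Un_upper2)
  then show "\<beta> - Poly_Mapping.single t 1 \<in> Nset n (k - 1)"
    using assms(1) deg by (auto simp: Nset_def)
qed

lemma lookup_pconst: "Poly_Mapping.lookup (pconst c) \<mu> = (if \<mu> = 0 then c else 0)"
  by (simp add: pconst_def lookup_single when_def)

lemma lookup_pconst_mult: "Poly_Mapping.lookup (pconst c * p) \<mu> = c * Poly_Mapping.lookup p \<mu>"
proof -
  have "pconst c * p = Poly_Mapping.map ((*) c) p"
    by (simp add: pconst_def mult_map_scale_conv_mult)
  then show ?thesis
    by (simp add: map.rep_eq when_def)
qed

lemma pconst_one: "pconst 1 = 1"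
  by (simp add: pconst_def)

lemma pconst_zero: "pconst 0 = 0"
  by (simp add: pconst_def)

lemma pconst_uminus: "pconst (- a) = - pconst a"
  by (simp add: pconst_def single_uminus)

lemma keys_pconst: "Poly_Mapping.keys (pconst c) \<subseteq> {0}"
  by (simp add: pconst_def)

lemma keys_pconst_mult: "Poly_Mapping.keys (pconst c * p) \<subseteq> Poly_Mapping.keys p"
  by (auto simp: in_keys_iff lookup_pconst_mult)

lemma mpoly_eq_sum_monomials:
  "(p::mpoly) = (\<Sum>\<gamma>\<in>Poly_Mapping.keys p. Poly_Mapping.single \<gamma> (Poly_Mapping.lookup p \<gamma>))"
  by (rule poly_mapping_eqI) (auto simp: lookup_sum lookup_single when_def in_keys_iff)

lemma pdeg_le: "(\<And>\<mu>. \<mu> \<in> Poly_Mapping.keys p \<Longrightarrow> mdeg \<mu> \<le> d) \<Longrightarrow> pdeg p \<le> d"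
  unfolding pdeg_def by (subst Max_le_iff) auto

lemma mdeg_le_pdeg: "\<mu> \<in> Poly_Mapping.keys p \<Longrightarrow> mdeg \<mu> \<le> pdeg p"
  unfolding pdeg_def by (rule Max_ge) auto

lemma pceil_one: "pceil 1 = 0"
  unfolding pceil_def pdeg_def by simp

lemma pceil_gg_0: "pceil (gg g 0) = 0"
  by (simp add: gg_def pceil_one)

section \<open>The Riesz functional L_y\<close>

definition riesz :: "(monom \<Rightarrow> real) \<Rightarrow> mpoly \<Rightarrow> real" where
  "riesz y p = (\<Sum>\<gamma>\<in>Poly_Mapping.keys p. Poly_Mapping.lookup p \<gamma> * y \<gamma>)"

lemma riesz_eq_sum_superset:
  "finite K \<Longrightarrow> Poly_Mapping.keys p \<subseteq> K \<Longrightarrow> riesz y p = (\<Sum>\<gamma>\<in>K. Poly_Mapping.lookup p \<gamma> * y \<gamma>)"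
  unfolding riesz_def by (rule sum.mono_neutral_left) (auto simp: in_keys_iff)

lemma riesz_add: "riesz y (p + q) = riesz y p + riesz y q"
proof -
  let ?K = "Poly_Mapping.keys p \<union> Poly_Mapping.keys q"
  have "riesz y (p + q) = (\<Sum>\<gamma>\<in>?K. Poly_Mapping.lookup (p + q) \<gamma> * y \<gamma>)"
    by (rule riesz_eq_sum_superset) (auto dest: subsetD[OF keys_add])
  also have "\<dots> = (\<Sum>\<gamma>\<in>?K. Poly_Mapping.lookup p \<gamma> * y \<gamma>) + (\<Sum>\<gamma>\<in>?K. Poly_Mapping.lookup q \<gamma> * y \<gamma>)"
    by (simp add: lookup_add sum.distrib distrib_right)
  also have "\<dots> = riesz y p + riesz y q"
    by (subst (1 2) riesz_eq_sum_superset[of ?K]) auto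
  finally show ?thesis .
qed

lemma riesz_zero [simp]: "riesz y 0 = 0"
  by (simp add: riesz_def)

lemma riesz_sum: "riesz y (\<Sum>i\<in>I. p i) = (\<Sum>i\<in>I. riesz y (p i))"
  by (induction I rule: infinite_finite_induct) (auto simp: riesz_add)

lemma riesz_single: "riesz y (Poly_Mapping.single \<mu> c) = c * y \<mu>"
  by (simp add: riesz_def)

lemma riesz_pconst: "riesz y (pconst c) = c * y 0"
  by (simp add: pconst_def riesz_single)

lemma riesz_pconst_mult: "riesz y (pconst c * p) = c * riesz y p"
proof -
  have "riesz y (pconst c * p) = (\<Sum>\<gamma>\<in>Poly_Mapping.keys p. Poly_Mapping.lookup (pconst c * p) \<gamma> * y \<gamma>)"
    by (rule riesz_eq_sum_superset) (auto simp: in_keys_iff lookup_pconst_mult)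
  then show ?thesis
    by (simp add: lookup_pconst_mult riesz_def sum_distrib_left mult.assoc)
qed

lemma Mloc_eq_riesz: "Mloc q y \<alpha> \<beta> = riesz y (q * Poly_Mapping.single (\<alpha> + \<beta>) 1)"
proof -
  have "q * Poly_Mapping.single (\<alpha> + \<beta>) 1 =
     (\<Sum>\<gamma>\<in>Poly_Mapping.keys q. Poly_Mapping.single (\<gamma> + (\<alpha> + \<beta>)) (Poly_Mapping.lookup q \<gamma>))"
    by (subst mpoly_eq_sum_monomials[of q]) (simp add: sum_distrib_right mult_single)
  then show ?thesis
    by (simp add: riesz_sum riesz_single Mloc_def add.commute add.left_commute)
qed


section \<open>Diagonal sums of squares\<close>

definition diag_sos :: "monom set \<Rightarrow> (monom \<Rightarrow> real) \<Rightarrow> mpoly" where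
  "diag_sos A w = (\<Sum>\<alpha>\<in>A. Poly_Mapping.single (\<alpha> + \<alpha>) (w \<alpha>))"

definition diag_mat :: "('i \<Rightarrow> real) \<Rightarrow> 'i \<Rightarrow> 'i \<Rightarrow> real" where
  "diag_mat w a b = (if a = b then w a else 0)"

lemma diag_mat_same [simp]: "diag_mat w a a = w a"
  by (simp add: diag_mat_def)

lemma diag_on_diag_mat [simp]: "diag_on I (diag_mat w)"
  by (simp add: diag_on_def diag_mat_def)

lemma quad_form_diag:
  assumes "diag_on I M" "finite I"
  shows "(\<Sum>a\<in>I. \<Sum>b\<in>I. v a * M a b * v b) = (\<Sum>a\<in>I. M a a * (v a)\<^sup>2)"
proof (rule sum.cong[OF refl])
  fix a assume a: "a \<in> I"
  have "(\<Sum>b\<in>I. v a * M a b * v b) = (\<Sum>b\<in>I. if b = a then M a a * (v a)\<^sup>2 else 0)"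
    using assms(1) a by (intro sum.cong) (auto simp: diag_on_def power2_eq_square)
  also have "\<dots> = M a a * (v a)\<^sup>2"
    using assms(2) a by (simp add: sum.delta')
  finally show "(\<Sum>b\<in>I. v a * M a b * v b) = M a a * (v a)\<^sup>2" .
qed

lemma psd_on_diagI:
  assumes "diag_on I M" "finite I" "\<And>a. a \<in> I \<Longrightarrow> 0 \<le> M a a"
  shows "psd_on I M"
  unfolding psd_on_def
proof (intro conjI allI ballI)
  fix a b assume "a \<in> I" "b \<in> I"
  then show "M a b = M b a"
    using assms(1) by (cases "a = b") (auto simp: diag_on_def)
next
  fix v :: "_ \<Rightarrow> real"
  show "0 \<le> (\<Sum>a\<in>I. \<Sum>b\<in>I. v a * M a b * v b)"
    unfolding quad_form_diag[OF assms(1,2)] using assms(3) by (intro sum_nonneg) simp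
qed

lemma pd_on_diagI:
  assumes "diag_on I M" "finite I" "\<And>a. a \<in> I \<Longrightarrow> 0 < M a a"
  shows "pd_on I M"
  unfolding pd_on_def
proof (intro conjI allI ballI impI)
  fix a b assume "a \<in> I" "b \<in> I"
  then show "M a b = M b a"
    using assms(1) by (cases "a = b") (auto simp: diag_on_def)
next
  fix v :: "_ \<Rightarrow> real"
  assume "\<exists>a\<in>I. v a \<noteq> 0"
  then obtain a where a: "a \<in> I" "v a \<noteq> 0" by blast
  have "0 < (\<Sum>a\<in>I. M a a * (v a)\<^sup>2)"
  proof (rule sum_pos2[OF assms(2) a(1)])
    show "0 < M a a * (v a)\<^sup>2" using assms(3)[OF a(1)] a(2) by simp
  next
    fix x assume "x \<in> I"
    then show "0 \<le> M x x * (v x)\<^sup>2" using assms(3) by (simp add: less_imp_le)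
  qed
  then show "0 < (\<Sum>a\<in>I. \<Sum>b\<in>I. v a * M a b * v b)"
    unfolding quad_form_diag[OF assms(1,2)] .
qed

lemma mat_mult_on_diag_conj:
  assumes "diag_on J P" "finite J" "x \<in> J"
  shows "mat_mult_on J (mat_mult_on J P D) P x x = P x x * D x x * P x x"
proof -
  have left: "(\<Sum>c\<in>J. P x c * D c b) = P x x * D x b" for b
  proof -
    have "(\<Sum>c\<in>J. P x c * D c b) = (\<Sum>c\<in>J. if c = x then P x x * D x b else 0)"
      using assms(1,3) by (intro sum.cong) (auto simp: diag_on_def)
    then show ?thesis using assms(2,3) by (simp add: sum.delta')
  qed
  have "(\<Sum>b\<in>J. P x x * D x b * P b x) = (\<Sum>b\<in>J. if b = x then P x x * D x x * P x x else 0)"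
    using assms(1,3) by (intro sum.cong) (auto simp: diag_on_def)
  then show ?thesis
    unfolding mat_mult_on_def left using assms(2,3) by (simp add: sum.delta')
qed

lemma quadpoly_diag:
  assumes "diag_on (Nset n d) G"
  shows "quadpoly n d G = diag_sos (Nset n d) (\<lambda>\<alpha>. G \<alpha> \<alpha>)"
  unfolding quadpoly_def diag_sos_def
proof (rule sum.cong[OF refl])
  fix \<alpha> assume \<alpha>: "\<alpha> \<in> Nset n d"
  have "(\<Sum>\<beta>\<in>Nset n d. pconst (G \<alpha> \<beta>) * Xm (\<alpha> + \<beta>)) =
        (\<Sum>\<beta>\<in>Nset n d. if \<beta> = \<alpha> then Poly_Mapping.single (\<alpha> + \<alpha>) (G \<alpha> \<alpha>) else 0)"
    using assms \<alpha> by (intro sum.cong) (auto simp: diag_on_def pconst_def Xm_def mult_single)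
  also have "\<dots> = Poly_Mapping.single (\<alpha> + \<alpha>) (G \<alpha> \<alpha>)"
    using finite_Nset \<alpha> by (simp add: sum.delta)
  finally show "(\<Sum>\<beta>\<in>Nset n d. pconst (G \<alpha> \<beta>) * Xm (\<alpha> + \<beta>)) = Poly_Mapping.single (\<alpha> + \<alpha>) (G \<alpha> \<alpha>)" .
qed

lemma riesz_mult_quadpoly_diag:
  assumes "diag_on (Nset n d) G"
  shows "riesz y (q * quadpoly n d G) = (\<Sum>\<alpha>\<in>Nset n d. G \<alpha> \<alpha> * Mloc q y \<alpha> \<alpha>)"
proof -
  have "q * quadpoly n d G = (\<Sum>\<alpha>\<in>Nset n d. pconst (G \<alpha> \<alpha>) * (q * Poly_Mapping.single (\<alpha> + \<alpha>) 1))"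
    unfolding quadpoly_diag[OF assms] diag_sos_def sum_distrib_left
  proof (intro sum.cong refl)
    fix \<alpha>
    have "Poly_Mapping.single (\<alpha> + \<alpha>) (G \<alpha> \<alpha>) = pconst (G \<alpha> \<alpha>) * Poly_Mapping.single (\<alpha> + \<alpha>) 1"
      by (simp add: pconst_def mult_single)
    then show "q * Poly_Mapping.single (\<alpha> + \<alpha>) (G \<alpha> \<alpha>) = pconst (G \<alpha> \<alpha>) * (q * Poly_Mapping.single (\<alpha> + \<alpha>) 1)"
      by (simp add: ac_simps)
  qed
  then show ?thesis
    by (simp add: riesz_sum riesz_pconst_mult Mloc_eq_riesz)
qed

lemma keys_diag_sos: "Poly_Mapping.keys (diag_sos A w) \<subseteq> (\<lambda>\<alpha>. \<alpha> + \<alpha>) ` A"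
  unfolding diag_sos_def using keys_sum[of "\<lambda>\<alpha>. Poly_Mapping.single (\<alpha> + \<alpha>) (w \<alpha>)" A]
  by (auto split: if_splits)

lemma lookup_diag_sos_double:
  assumes "finite A"
  shows "Poly_Mapping.lookup (diag_sos A w) (\<beta> + \<beta>) = (if \<beta> \<in> A then w \<beta> else 0)"
proof -
  have "Poly_Mapping.lookup (diag_sos A w) (\<beta> + \<beta>) = (\<Sum>\<alpha>\<in>A. if \<alpha> = \<beta> then w \<alpha> else 0)"
    unfolding diag_sos_def lookup_sum
    by (intro sum.cong) (auto simp: lookup_single when_def dest: monom_double_inj)
  also have "\<dots> = (if \<beta> \<in> A then w \<beta> else 0)"
    using assms by (simp add: sum.delta')
  finally show ?thesis .
qed

definition even_monoms :: "nat \<Rightarrow> nat \<Rightarrow> monom set" where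
  "even_monoms n d = (\<lambda>\<alpha>. \<alpha> + \<alpha>) ` Nset n d"

lemma zero_in_even_monoms: "0 \<in> even_monoms n d"
  unfolding even_monoms_def by (rule image_eqI[of _ _ 0]) simp_all

lemma add_in_even_monoms: "a \<in> even_monoms n d \<Longrightarrow> b \<in> even_monoms n e \<Longrightarrow> a + b \<in> even_monoms n (d + e)"
  unfolding even_monoms_def by (auto simp: ac_simps intro!: image_eqI add_in_Nset)

lemma keys_mult_even_monoms:
  assumes "Poly_Mapping.keys p \<subseteq> even_monoms n d" "Poly_Mapping.keys q \<subseteq> even_monoms n e"
  shows "Poly_Mapping.keys (p * q) \<subseteq> even_monoms n (d + e)"
  using keys_mult[of p q] assms add_in_even_monoms by blast

lemma diag_sos_of_even_keys:
  assumes "Poly_Mapping.keys p \<subseteq> even_monoms n d"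
  shows "p = diag_sos (Nset n d) (\<lambda>\<alpha>. Poly_Mapping.lookup p (\<alpha> + \<alpha>))"
proof (rule poly_mapping_eqI)
  fix \<mu>
  let ?q = "diag_sos (Nset n d) (\<lambda>\<alpha>. Poly_Mapping.lookup p (\<alpha> + \<alpha>))"
  show "Poly_Mapping.lookup p \<mu> = Poly_Mapping.lookup ?q \<mu>"
  proof (cases "\<mu> \<in> even_monoms n d")
    case True
    then obtain \<beta> where "\<beta> \<in> Nset n d" "\<mu> = \<beta> + \<beta>"
      unfolding even_monoms_def by blast
    then show ?thesis
      by (simp add: lookup_diag_sos_double finite_Nset)
  next
    case False
    then have "\<mu> \<notin> Poly_Mapping.keys p" "\<mu> \<notin> Poly_Mapping.keys ?q"
      using assms keys_diag_sos[of "Nset n d"] unfolding even_monoms_def by blast+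
    then show ?thesis
      unfolding in_keys_iff by simp
  qed
qed

lemma keys_sqnorm: "Poly_Mapping.keys (sqnorm T) \<subseteq> {Poly_Mapping.single t 2 | t. t \<in> T}"
  unfolding sqnorm_def Xm_def
  using keys_sum[of "\<lambda>t. Poly_Mapping.single (Poly_Mapping.single t (2::nat)) (1::real)" T]
  by auto

lemma keys_norm_constraint:
  "Poly_Mapping.keys (pconst c + pconst s * sqnorm T) \<subseteq> {0} \<union> {Poly_Mapping.single t 2 | t. t \<in> T}"
  using keys_add[of "pconst c" "pconst s * sqnorm T"] keys_pconst_mult[of s "sqnorm T"]
    keys_pconst[of c] keys_sqnorm[of T]
  by blast

lemma pceil_norm_constraint_le_1: "pceil (pconst c + pconst s * sqnorm T) \<le> 1"
proof -
  have "pdeg (pconst c + pconst s * sqnorm T) \<le> 2"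
    using keys_norm_constraint[of c s T] by (intro pdeg_le) (auto simp: mdeg_single)
  then show ?thesis
    unfolding pceil_def by simp
qed

lemma keys_norm_constraint_even:
  assumes "T \<subseteq> {1..n}"
  shows "Poly_Mapping.keys (pconst c + pconst s * sqnorm T)
           \<subseteq> even_monoms n (pceil (pconst c + pconst s * sqnorm T))"
proof
  let ?q = "pconst c + pconst s * sqnorm T"
  fix \<mu> assume \<mu>: "\<mu> \<in> Poly_Mapping.keys ?q"
  then consider "\<mu> = 0" | t where "t \<in> T" "\<mu> = Poly_Mapping.single t 2"
    using keys_norm_constraint[of c s T] by blast
  then show "\<mu> \<in> even_monoms n (pceil ?q)"
  proof cases
    case 1
    then show ?thesis using zero_in_even_monoms by simp
  next
    case (2 t)
    have "2 \<le> pdeg ?q"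
      using mdeg_le_pdeg[OF \<mu>] 2(2) by (simp add: mdeg_single)
    then have "Poly_Mapping.single t 1 \<in> Nset n (pceil ?q)"
      using 2(1) assms by (auto simp: Nset_def mdeg_single pceil_def)
    then show ?thesis
      unfolding even_monoms_def 2(2) single_two_eq by (rule imageI)
  qed
qed

(* The second term comes from the products x_t^2 x^(2 (beta - e_t)) with t \<in> T and beta_t > 0. *)
definition norm_constraint_coeff ::
  "nat \<Rightarrow> real \<Rightarrow> real \<Rightarrow> nat set \<Rightarrow> (nat \<Rightarrow> real) \<Rightarrow> nat \<Rightarrow> monom \<Rightarrow> real" where
  "norm_constraint_coeff n c s T w d \<beta> =
     c * (if \<beta> \<in> Nset n d then w (mdeg \<beta>) else 0)
     + s * w (mdeg \<beta> - 1) * real (card (T \<inter> Poly_Mapping.keys \<beta>))"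

lemma lookup_single_sq_double:
  "Poly_Mapping.lookup (Poly_Mapping.single (Poly_Mapping.single t (2::nat) + (\<alpha> + \<alpha>)) (c::real))
     ((\<beta>::monom) + \<beta>) =
     (if 0 < Poly_Mapping.lookup \<beta> t \<and> \<alpha> = \<beta> - Poly_Mapping.single t 1 then c else 0)"
proof -
  have "Poly_Mapping.single t 2 + (\<alpha> + \<alpha>) = \<beta> + \<beta> \<longleftrightarrow>
        (Poly_Mapping.single t 1 + \<alpha>) + (Poly_Mapping.single t 1 + \<alpha>) = \<beta> + \<beta>"
    by (simp add: single_two_eq ac_simps)
  also have "\<dots> \<longleftrightarrow> Poly_Mapping.single t 1 + \<alpha> = \<beta>"
    using monom_double_inj by blast
  also have "\<dots> \<longleftrightarrow> 0 < Poly_Mapping.lookup \<beta> t \<and> \<alpha> = \<beta> - Poly_Mapping.single t 1"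
    by (rule single_add_eq_iff)
  finally have eq: "Poly_Mapping.single t 2 + (\<alpha> + \<alpha>) = \<beta> + \<beta> \<longleftrightarrow>
      0 < Poly_Mapping.lookup \<beta> t \<and> \<alpha> = \<beta> - Poly_Mapping.single t 1" .
  show ?thesis
    unfolding lookup_single when_def eq by simp
qed

lemma lookup_sqnorm_mult_diag_sos:
  assumes "finite A" "finite T"
  shows "Poly_Mapping.lookup (sqnorm T * diag_sos A w) (\<beta> + \<beta>) =
    (\<Sum>t\<in>T. if 0 < Poly_Mapping.lookup \<beta> t \<and> \<beta> - Poly_Mapping.single t 1 \<in> A
             then w (\<beta> - Poly_Mapping.single t 1) else 0)"
proof -
  have "sqnorm T * diag_sos A w =
      (\<Sum>t\<in>T. \<Sum>\<alpha>\<in>A. Poly_Mapping.single (Poly_Mapping.single t 2 + (\<alpha> + \<alpha>)) (w \<alpha>))"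
    unfolding sqnorm_def diag_sos_def Xm_def
    by (simp add: sum_distrib_right sum_distrib_left mult_single sum.swap[of _ A T])
  then have "Poly_Mapping.lookup (sqnorm T * diag_sos A w) (\<beta> + \<beta>) =
      (\<Sum>t\<in>T. \<Sum>\<alpha>\<in>A. if 0 < Poly_Mapping.lookup \<beta> t \<and> \<alpha> = \<beta> - Poly_Mapping.single t 1 then w \<alpha> else 0)"
    by (simp add: lookup_sum lookup_single_sq_double del: One_nat_def)
  also have "\<dots> = (\<Sum>t\<in>T. if 0 < Poly_Mapping.lookup \<beta> t \<and> \<beta> - Poly_Mapping.single t 1 \<in> A
             then w (\<beta> - Poly_Mapping.single t 1) else 0)"
  proof (intro sum.cong refl)
    fix t
    show "(\<Sum>\<alpha>\<in>A. if 0 < Poly_Mapping.lookup \<beta> t \<and> \<alpha> = \<beta> - Poly_Mapping.single t 1 then w \<alpha> else 0) =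
      (if 0 < Poly_Mapping.lookup \<beta> t \<and> \<beta> - Poly_Mapping.single t 1 \<in> A
       then w (\<beta> - Poly_Mapping.single t 1) else 0)"
      using assms(1) by (cases "0 < Poly_Mapping.lookup \<beta> t") (simp_all add: sum.delta' del: One_nat_def)
  qed
  finally show ?thesis .
qed

lemma lookup_norm_constraint_mult_diag_sos:
  assumes T: "finite T" and \<beta>: "\<beta> \<in> Nset n k" and d: "k - 1 \<le> d"
  shows "Poly_Mapping.lookup ((pconst c + pconst s * sqnorm T) * diag_sos (Nset n d) (\<lambda>\<alpha>. w (mdeg \<alpha>)))
           (\<beta> + \<beta>) = norm_constraint_coeff n c s T w d \<beta>"
proof -
  have "(\<Sum>t\<in>T. if 0 < Poly_Mapping.lookup \<beta> t \<and> \<beta> - Poly_Mapping.single t 1 \<in> Nset n d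
             then w (mdeg (\<beta> - Poly_Mapping.single t 1)) else 0)
      = (\<Sum>t\<in>T. if t \<in> Poly_Mapping.keys \<beta> then w (mdeg \<beta> - 1) else 0)"
    using minus_single_in_Nset[OF \<beta>] Nset_mono[OF d] by (intro sum.cong) (auto simp: in_keys_iff)
  also have "\<dots> = w (mdeg \<beta> - 1) * real (card (T \<inter> Poly_Mapping.keys \<beta>))"
    using T by (simp add: sum.If_cases)
  finally have "Poly_Mapping.lookup (sqnorm T * diag_sos (Nset n d) (\<lambda>\<alpha>. w (mdeg \<alpha>))) (\<beta> + \<beta>)
      = w (mdeg \<beta> - 1) * real (card (T \<inter> Poly_Mapping.keys \<beta>))"
    by (simp add: lookup_sqnorm_mult_diag_sos[OF finite_Nset T] del: One_nat_def)
  then show ?thesis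
    by (simp add: norm_constraint_coeff_def distrib_right lookup_add mult.assoc lookup_pconst_mult
        lookup_diag_sos_double finite_Nset del: One_nat_def)
qed

definition diagonal_certificate ::
  "nat \<Rightarrow> nat \<Rightarrow> (nat \<Rightarrow> mpoly) \<Rightarrow> nat \<Rightarrow> real \<Rightarrow> (nat \<Rightarrow> monom \<Rightarrow> monom \<Rightarrow> real) \<Rightarrow> bool" where
  "diagonal_certificate n m g k \<xi> G \<longleftrightarrow> 0 < \<xi> \<and>
     (\<forall>i\<in>{0..m}. diag_on (Nset n (k - pceil (gg g i))) (G i) \<and>
                  (\<forall>\<alpha>\<in>Nset n (k - pceil (gg g i)). 1 \<le> G i \<alpha> \<alpha>)) \<and>
     pconst \<xi> = quadpoly n k (G 0) + (\<Sum>i\<in>{1..m}. g i * quadpoly n (k - pceil (g i)) (G i))"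

lemma diagonal_certificate_of_dominant_coeffs:
  fixes c s :: "nat \<Rightarrow> real" and V :: "nat \<Rightarrow> nat set" and W :: "nat \<Rightarrow> nat \<Rightarrow> real"
  assumes g_eq: "\<And>i. i \<in> {1..m} \<Longrightarrow> g i = pconst (c i) + pconst (s i) * sqnorm (V i)"
    and V_sub: "\<And>i. i \<in> {1..m} \<Longrightarrow> V i \<subseteq> {1..n}"
    and pceil_le: "\<And>i. i \<in> {1..m} \<Longrightarrow> pceil (g i) \<le> k"
    and W_ge: "\<And>i j. i \<in> {1..m} \<Longrightarrow> 1 \<le> W i j"
    and pos: "0 < 1 + (\<Sum>i\<in>{1..m}. c i * W i 0)"
    and dominant: "\<And>\<beta>. \<beta> \<in> Nset n k \<Longrightarrow> \<beta> \<noteq> 0 \<Longrightarrow>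
      (\<Sum>i\<in>{1..m}. norm_constraint_coeff n (c i) (s i) (V i) (W i) (k - pceil (g i)) \<beta>) \<le> -1"
  shows "\<exists>G. diagonal_certificate n m g k (1 + (\<Sum>i\<in>{1..m}. c i * W i 0)) G"
proof -
  define \<xi> where "\<xi> = 1 + (\<Sum>i\<in>{1..m}. c i * W i 0)"
  define \<sigma> where "\<sigma> i = diag_sos (Nset n (k - pceil (g i))) (\<lambda>\<alpha>. W i (mdeg \<alpha>))" for i
  define p where "p = pconst \<xi> - (\<Sum>i\<in>{1..m}. g i * \<sigma> i)"
  have keys_g_\<sigma>: "Poly_Mapping.keys (g i * \<sigma> i) \<subseteq> even_monoms n k" if i: "i \<in> {1..m}" for i
  proof -
    have "Poly_Mapping.keys (g i) \<subseteq> even_monoms n (pceil (g i))"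
      using keys_norm_constraint_even[OF V_sub[OF i]] g_eq[OF i] by simp
    from keys_mult_even_monoms[OF this] keys_diag_sos
    have "Poly_Mapping.keys (g i * \<sigma> i) \<subseteq> even_monoms n (pceil (g i) + (k - pceil (g i)))"
      unfolding \<sigma>_def even_monoms_def by blast
    then show ?thesis
      using pceil_le[OF i] by simp
  qed
  have keys_p: "Poly_Mapping.keys p \<subseteq> even_monoms n k"
  proof -
    have "Poly_Mapping.keys (\<Sum>i\<in>{1..m}. g i * \<sigma> i) \<subseteq> even_monoms n k"
      using keys_sum[of "\<lambda>i. g i * \<sigma> i" "{1..m}"] keys_g_\<sigma> by blast
    moreover have "Poly_Mapping.keys (pconst \<xi>) \<subseteq> even_monoms n k"
      using keys_pconst[of \<xi>] zero_in_even_monoms by blast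
    ultimately show ?thesis
      unfolding p_def using keys_diff[of "pconst \<xi>" "\<Sum>i\<in>{1..m}. g i * \<sigma> i"] by blast
  qed
  have coeff_p: "Poly_Mapping.lookup p (\<beta> + \<beta>) = (if \<beta> = 0 then \<xi> else 0) -
      (\<Sum>i\<in>{1..m}. norm_constraint_coeff n (c i) (s i) (V i) (W i) (k - pceil (g i)) \<beta>)"
    if \<beta>: "\<beta> \<in> Nset n k" for \<beta>
  proof -
    have "Poly_Mapping.lookup (g i * \<sigma> i) (\<beta> + \<beta>) =
        norm_constraint_coeff n (c i) (s i) (V i) (W i) (k - pceil (g i)) \<beta>" if i: "i \<in> {1..m}" for i
    proof -
      have "pceil (g i) \<le> 1"
        using pceil_norm_constraint_le_1 g_eq[OF i] by simp
      then have "k - 1 \<le> k - pceil (g i)"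
        by simp
      then show ?thesis
        unfolding \<sigma>_def g_eq[OF i]
        using lookup_norm_constraint_mult_diag_sos[OF finite_subset[OF V_sub[OF i]] \<beta>] by simp
    qed
    moreover have "\<beta> + \<beta> = 0 \<longleftrightarrow> \<beta> = 0"
      by (metis add_0 monom_double_inj)
    ultimately show ?thesis
      unfolding p_def lookup_minus lookup_sum lookup_pconst by simp
  qed
  have diag_p: "1 \<le> Poly_Mapping.lookup p (\<beta> + \<beta>)" if \<beta>: "\<beta> \<in> Nset n k" for \<beta>
  proof (cases "\<beta> = 0")
    case True
    then show ?thesis
      using coeff_p[OF \<beta>] by (simp add: norm_constraint_coeff_def \<xi>_def)
  next
    case False
    then show ?thesis
      using coeff_p[OF \<beta>] dominant[OF \<beta>] by simp
  qed
  define G where "G i = diag_mat (\<lambda>\<alpha>. if i = 0 then Poly_Mapping.lookup p (\<alpha> + \<alpha>) else W i (mdeg \<alpha>))"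
    for i
  have "quadpoly n k (G 0) = diag_sos (Nset n k) (\<lambda>\<alpha>. Poly_Mapping.lookup p (\<alpha> + \<alpha>))"
    by (simp add: G_def quadpoly_diag)
  also have "\<dots> = p"
    by (rule diag_sos_of_even_keys[OF keys_p, symmetric])
  finally have "quadpoly n k (G 0) = p" .
  moreover have "quadpoly n (k - pceil (g i)) (G i) = \<sigma> i" if "i \<in> {1..m}" for i
    using that by (simp add: G_def quadpoly_diag \<sigma>_def)
  ultimately have "pconst \<xi> = quadpoly n k (G 0) + (\<Sum>i\<in>{1..m}. g i * quadpoly n (k - pceil (g i)) (G i))"
    by (simp add: p_def)
  moreover have "1 \<le> G i \<alpha> \<alpha>" if "i \<in> {0..m}" "\<alpha> \<in> Nset n (k - pceil (gg g i))" for i \<alpha>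
    using that diag_p W_ge by (auto simp: G_def pceil_gg_0)
  moreover have "diag_on (Nset n d) (G i)" for i d
    by (simp add: G_def)
  ultimately have "diagonal_certificate n m g k \<xi> G"
    unfolding diagonal_certificate_def using pos \<xi>_def by blast
  then show ?thesis
    unfolding \<xi>_def by blast
qed

section \<open>Annulus and ball constraints\<close>

lemma sum_split_pairs:
  assumes "2 * r \<le> (m::nat)"
  shows "(\<Sum>i\<in>{1..m}. f i) =
    (\<Sum>i\<in>{1..r}. f i + f (i + r)) + (\<Sum>i\<in>{2*r+1..m}. (f i :: 'a::comm_monoid_add))"
proof -
  have "{1..m} = {1..r} \<union> {r+1..2*r} \<union> {2*r+1..m}"
    using assms by auto
  then have "(\<Sum>i\<in>{1..m}. f i) = (\<Sum>i\<in>{1..r}. f i) + (\<Sum>i\<in>{r+1..2*r}. f i) + (\<Sum>i\<in>{2*r+1..m}. f i)"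
    by (simp only:) (subst sum.union_disjoint, auto)+
  moreover have "(\<Sum>i\<in>{r+1..2*r}. f i) = (\<Sum>i\<in>{1..r}. f (i + r))"
  proof -
    have shift: "{r+1..2*r} = (\<lambda>i. i + r) ` {1..r}"
      using image_add_atLeastAtMost[of r 1 r] by (simp add: add.commute mult_2)
    show ?thesis
      unfolding shift by (subst sum.reindex) (auto simp: inj_on_def)
  qed
  ultimately show ?thesis
    by (simp add: sum.distrib)
qed

locale annuli_and_balls =
  fixes n m r :: nat and g :: "nat \<Rightarrow> mpoly" and Rlo Rup :: "nat \<Rightarrow> real" and T :: "nat \<Rightarrow> nat set"
  assumes r_le: "2 * r \<le> m"
    and R_ann: "\<forall>i\<in>{1..r}. Rup i > Rlo i \<and> Rlo i > 0"
    and R_ball: "\<forall>j\<in>{2*r+1..m}. Rup j > 0"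
    and T_sub: "\<forall>i\<in>{1..r} \<union> {2*r+1..m}. T i \<subseteq> {1..n}"
    and T_cover: "(\<Union>i\<in>{1..r}. T i) \<union> (\<Union>j\<in>{2*r+1..m}. T j) = {1..n}"
    and g_low: "\<forall>i\<in>{1..r}. g i = sqnorm (T i) - pconst (Rlo i)"
    and g_up: "\<forall>i\<in>{1..r}. g (i + r) = pconst (Rup i) - sqnorm (T i)"
    and g_ball: "\<forall>j\<in>{2*r+1..m}. g j = pconst (Rup j) - sqnorm (T j)"
begin

definition constraint_const :: "nat \<Rightarrow> real" where
  "constraint_const i = (if i \<le> r then - Rlo i else if i \<le> 2 * r then Rup (i - r) else Rup i)"

definition constraint_sign :: "nat \<Rightarrow> real" where
  "constraint_sign i = (if i \<le> r then 1 else -1)"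

definition constraint_vars :: "nat \<Rightarrow> nat set" where
  "constraint_vars i = (if r < i \<and> i \<le> 2 * r then T (i - r) else T i)"

lemma constraint_cases:
  assumes "i \<in> {1..m}"
  obtains "i \<in> {1..r}" | i' where "i' \<in> {1..r}" "i = i' + r" | "i \<in> {2*r+1..m}"
proof (cases "i \<le> r")
  case False
  show ?thesis
  proof (cases "i \<le> 2 * r")
    case True
    then show ?thesis
      using False that(2)[of "i - r"] by auto
  qed (use assms that(3) in auto)
qed (use assms that(1) in auto)

lemma g_eq_norm_constraint:
  assumes "i \<in> {1..m}"
  shows "g i = pconst (constraint_const i) + pconst (constraint_sign i) * sqnorm (constraint_vars i)"
  using assms
  by (cases rule: constraint_cases)
    (use g_low g_up g_ball in \<open>auto simp: constraint_const_def constraint_sign_def constraint_vars_def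
      pconst_uminus pconst_one\<close>)

lemma constraint_vars_subset:
  assumes "i \<in> {1..m}"
  shows "constraint_vars i \<subseteq> {1..n}"
  using assms by (cases rule: constraint_cases) (use T_sub in \<open>auto simp: constraint_vars_def\<close>)

definition outer_radius_sum :: real where
  "outer_radius_sum = (\<Sum>i\<in>{1..r}. Rup i) + (\<Sum>i\<in>{2*r+1..m}. Rup i)"

definition weight :: "nat \<Rightarrow> nat \<Rightarrow> nat \<Rightarrow> real" where
  "weight k i j = (if i \<le> r then 1 else (2 + outer_radius_sum) ^ (k - j))"

lemma outer_radius_sum_nonneg: "0 \<le> outer_radius_sum"
proof -
  have "0 \<le> Rup i" if "i \<in> {1..r}" for i
    using bspec[OF R_ann that] by linarith
  moreover have "0 \<le> Rup i" if "i \<in> {2*r+1..m}" for i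
    using bspec[OF R_ball that] by linarith
  ultimately show ?thesis
    unfolding outer_radius_sum_def by (auto intro!: add_nonneg_nonneg sum_nonneg)
qed

lemma weight_ge_1: "1 \<le> weight k i j"
  using outer_radius_sum_nonneg by (simp add: weight_def one_le_power)

lemma covering_count:
  assumes "\<beta> \<in> Nset n k" "\<beta> \<noteq> 0"
  shows "1 \<le> (\<Sum>i\<in>{1..r}. real (card (constraint_vars i \<inter> Poly_Mapping.keys \<beta>)))
           + (\<Sum>i\<in>{2*r+1..m}. real (card (constraint_vars i \<inter> Poly_Mapping.keys \<beta>)))"
proof -
  define N where "N i = real (card (constraint_vars i \<inter> Poly_Mapping.keys \<beta>))" for i
  obtain t where t: "t \<in> Poly_Mapping.keys \<beta>"
    using assms(2) keys_eq_empty by blast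
  then have "t \<in> {1..n}"
    using assms(1) by (auto simp: Nset_def)
  then obtain i where i: "i \<in> {1..r} \<union> {2*r+1..m}" "t \<in> T i"
    using T_cover by blast
  then have "t \<in> constraint_vars i \<inter> Poly_Mapping.keys \<beta>"
    using t by (auto simp: constraint_vars_def)
  then have "1 \<le> N i"
    unfolding N_def by (metis One_nat_def Suc_leI card_gt_0_iff empty_iff finite_Int finite_keys of_nat_1 of_nat_mono)
  moreover have "N i \<le> (\<Sum>i\<in>{1..r}. N i) + (\<Sum>i\<in>{2*r+1..m}. N i)"
  proof -
    have N_nonneg: "0 \<le> N i" for i
      by (simp add: N_def)
    then have "0 \<le> (\<Sum>i\<in>{1..r}. N i)" "0 \<le> (\<Sum>i\<in>{2*r+1..m}. N i)"
      by (simp_all add: sum_nonneg)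
    moreover have "N i \<le> (\<Sum>i\<in>{1..r}. N i) \<or> N i \<le> (\<Sum>i\<in>{2*r+1..m}. N i)"
      using i(1) N_nonneg by (auto intro: member_le_sum)
    ultimately show ?thesis
      by linarith
  qed
  ultimately show ?thesis
    unfolding N_def by linarith
qed

lemma coeff_dominance:
  assumes \<beta>: "\<beta> \<in> Nset n k" "\<beta> \<noteq> 0"
  shows "(\<Sum>i\<in>{1..m}. norm_constraint_coeff n (constraint_const i) (constraint_sign i) (constraint_vars i)
            (weight k i) (k - pceil (g i)) \<beta>) \<le> -1"
proof -
  define S where "S = outer_radius_sum"
  define v where "v = (2 + S) ^ (k - mdeg \<beta>)"
  define N where "N i = real (card (constraint_vars i \<inter> Poly_Mapping.keys \<beta>))" for i
  define F where "F i = norm_constraint_coeff n (constraint_const i) (constraint_sign i) (constraint_vars i)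
                          (weight k i) (k - pceil (g i)) \<beta>" for i
  define c where "c = (2 + S) * v - 1"
  define B where "B i = Rup i * v - c * N i" for i
  have S: "0 \<le> S" and v: "1 \<le> v" and N: "0 \<le> N i" for i
    using outer_radius_sum_nonneg by (auto simp: S_def v_def N_def one_le_power)
  have "1 \<le> mdeg \<beta>" "mdeg \<beta> \<le> k"
    using \<beta> mdeg_eq_0_iff[of \<beta>] by (auto simp: Nset_def)
  then have w_outer: "weight k i (mdeg \<beta>) = v" "weight k i (mdeg \<beta> - 1) = (2 + S) * v" if "r < i" for i
    using that by (simp_all add: weight_def v_def S_def Suc_diff_le flip: power_Suc)
  have w_inner: "weight k i j = 1" if "i \<le> r" for i j
    using that by (simp add: weight_def)
  have pair: "F i + F (i + r) \<le> B i" if i: "i \<in> {1..r}" for i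
  proof -
    have "F i \<le> N i"
      using i bspec[OF R_ann i] by (auto simp: F_def N_def norm_constraint_coeff_def constraint_const_def
          constraint_sign_def w_inner)
    moreover have "0 \<le> Rup i * v"
      using bspec[OF R_ann i] v by simp
    then have "F (i + r) \<le> Rup i * v - (2 + S) * v * N i"
      using i by (auto simp: F_def N_def norm_constraint_coeff_def constraint_const_def
          constraint_sign_def constraint_vars_def w_outer simp del: One_nat_def)
    ultimately show ?thesis
      by (simp add: B_def c_def algebra_simps)
  qed
  have ball: "F i \<le> B i" if i: "i \<in> {2*r+1..m}" for i
  proof -
    have "F i \<le> Rup i * v - (2 + S) * v * N i"
      using i bspec[OF R_ball i] v by (auto simp: F_def N_def norm_constraint_coeff_def constraint_const_def
          constraint_sign_def constraint_vars_def w_outer simp del: One_nat_def)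
    then show ?thesis
      using N[of i] by (simp add: B_def c_def algebra_simps)
  qed
  have "(\<Sum>i\<in>{1..m}. F i) = (\<Sum>i\<in>{1..r}. F i + F (i + r)) + (\<Sum>i\<in>{2*r+1..m}. F i)"
    by (rule sum_split_pairs[OF r_le])
  also have "\<dots> \<le> (\<Sum>i\<in>{1..r}. B i) + (\<Sum>i\<in>{2*r+1..m}. B i)"
    by (intro add_mono sum_mono pair ball)
  also have "\<dots> = S * v - c * ((\<Sum>i\<in>{1..r}. N i) + (\<Sum>i\<in>{2*r+1..m}. N i))"
  proof -
    have "(\<Sum>i\<in>A. B i) = (\<Sum>i\<in>A. Rup i) * v - c * (\<Sum>i\<in>A. N i)" for A
      by (simp add: B_def sum_subtractf sum_distrib_left sum_distrib_right mult.commute)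
    then show ?thesis
      by (simp add: S_def outer_radius_sum_def algebra_simps)
  qed
  also have "\<dots> \<le> S * v - c"
  proof -
    have "1 * 1 \<le> (2 + S) * v"
      using S v by (intro mult_mono) auto
    then show ?thesis
      using mult_left_mono[OF covering_count[OF \<beta>], of c] unfolding N_def c_def by simp
  qed
  also have "\<dots> \<le> -1"
    using v by (simp add: c_def algebra_simps)
  finally show ?thesis
    unfolding F_def .
qed

lemma certificate_const_pos: "0 < 1 + (\<Sum>i\<in>{1..m}. constraint_const i * weight k i 0)"
proof -
  define v where "v = (2 + outer_radius_sum) ^ k"
  have v: "1 \<le> v"
    using weight_ge_1[of k "r + 1" 0] by (simp add: v_def weight_def)
  have "0 \<le> constraint_const i * weight k i 0 + constraint_const (i + r) * weight k (i + r) 0"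
    if "i \<in> {1..r}" for i
  proof -
    have "Rlo i < Rup i" "0 < Rlo i"
      using bspec[OF R_ann that] by auto
    moreover have "Rup i * 1 \<le> Rup i * v"
      using calculation v by (intro mult_left_mono) auto
    ultimately have "Rlo i \<le> Rup i * v"
      by linarith
    then show ?thesis
      using that by (simp add: constraint_const_def weight_def v_def)
  qed
  moreover have "0 \<le> constraint_const i * weight k i 0" if "i \<in> {2*r+1..m}" for i
    using that bspec[OF R_ball that] weight_ge_1[of k i 0] by (simp add: constraint_const_def)
  ultimately show ?thesis
    unfolding sum_split_pairs[OF r_le] by (smt (verit) sum_nonneg)
qed

lemma diagonal_certificate_exists:
  assumes "\<And>i. i \<in> {1..m} \<Longrightarrow> pceil (g i) \<le> k"
  shows "\<exists>\<xi> G. diagonal_certificate n m g k \<xi> G"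
  using diagonal_certificate_of_dominant_coeffs[OF g_eq_norm_constraint constraint_vars_subset assms
      weight_ge_1 certificate_const_pos coeff_dominance]
  by blast

end

section \<open>Feasibility of (LP_k) and the constant trace property\<close>

lemma LP_feasible_if_diagonal_certificate:
  assumes "diagonal_certificate n m g k \<xi> G"
  shows "LP_feasible n m l g h k"
proof -
  have "diag_on (Nset n (k - pceil (gg g i))) (G i) \<and>
        psd_on (Nset n (k - pceil (gg g i))) (\<lambda>a b. G i a b - idm a b)" if "i \<in> {0..m}" for i
  proof -
    have diag: "diag_on (Nset n (k - pceil (gg g i))) (G i)"
      and ge: "\<forall>\<alpha>\<in>Nset n (k - pceil (gg g i)). 1 \<le> G i \<alpha> \<alpha>"
      using assms that by (auto simp: diagonal_certificate_def)
    have "psd_on (Nset n (k - pceil (gg g i))) (\<lambda>a b. G i a b - idm a b)"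
      using diag ge by (intro psd_on_diagI) (auto simp: diag_on_def idm_def finite_Nset)
    with diag show ?thesis ..
  qed
  moreover have "pconst \<xi> = quadpoly n k (G 0)
                   + (\<Sum>i\<in>{1..m}. g i * quadpoly n (k - pceil (g i)) (G i))
                   + (\<Sum>j\<in>{1..l}. h j * linpoly n (2 * (k - pceil (h j))) (\<lambda>_. 0))"
    using assms by (simp add: diagonal_certificate_def linpoly_def pconst_zero)
  ultimately show ?thesis
    unfolding LP_feasible_def by (intro exI[of _ \<xi>] exI[of _ G] exI[of _ "\<lambda>_ _. 0"]) auto
qed

lemma Jset_eq_Sigma: "Jset n m g k = Sigma {0..m} (\<lambda>i. Nset n (k - pceil (gg g i)))"
  by (auto simp: Jset_def)

lemma finite_Jset: "finite (Jset n m g k)"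
  by (simp add: Jset_eq_Sigma finite_Nset)

lemma trace_conj_diag_Dmat:
  assumes "diag_on (Jset n m g k) P"
  shows "trace_on (Jset n m g k) (mat_mult_on (Jset n m g k) (mat_mult_on (Jset n m g k) P (Dmat g y)) P) =
    (\<Sum>i\<in>{0..m}. \<Sum>\<alpha>\<in>Nset n (k - pceil (gg g i)). (P (i, \<alpha>) (i, \<alpha>))\<^sup>2 * Mloc (gg g i) y \<alpha> \<alpha>)"
proof -
  have "trace_on (Jset n m g k) (mat_mult_on (Jset n m g k) (mat_mult_on (Jset n m g k) P (Dmat g y)) P) =
      (\<Sum>x\<in>Jset n m g k. (P x x)\<^sup>2 * Mloc (gg g (fst x)) y (snd x) (snd x))"
    unfolding trace_on_def
    by (intro sum.cong refl)
      (simp add: mat_mult_on_diag_conj[OF assms finite_Jset] Dmat_def power2_eq_square algebra_simps)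
  then show ?thesis
    by (simp add: Jset_eq_Sigma sum.Sigma finite_Nset split_beta)
qed

lemma riesz_diagonal_certificate:
  assumes "diagonal_certificate n m g k \<xi> G"
  shows "(\<Sum>i\<in>{0..m}. \<Sum>\<alpha>\<in>Nset n (k - pceil (gg g i)). G i \<alpha> \<alpha> * Mloc (gg g i) y \<alpha> \<alpha>) = \<xi> * y 0"
proof -
  have diag: "diag_on (Nset n (k - pceil (gg g i))) (G i)" if "i \<in> {0..m}" for i
    using assms that by (simp add: diagonal_certificate_def)
  have "(\<Sum>i\<in>{0..m}. \<Sum>\<alpha>\<in>Nset n (k - pceil (gg g i)). G i \<alpha> \<alpha> * Mloc (gg g i) y \<alpha> \<alpha>) =
      (\<Sum>i\<in>{0..m}. riesz y (gg g i * quadpoly n (k - pceil (gg g i)) (G i)))"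
    using diag by (simp add: riesz_mult_quadpoly_diag)
  also have "\<dots> = riesz y (quadpoly n k (G 0) + (\<Sum>i\<in>{1..m}. g i * quadpoly n (k - pceil (g i)) (G i)))"
    by (simp add: sum.atLeast_Suc_atMost riesz_add riesz_sum gg_def pceil_one)
  also have "\<dots> = \<xi> * y 0"
    using assms by (simp add: diagonal_certificate_def riesz_pconst flip: riesz_pconst)
  finally show ?thesis .
qed

lemma CTP_if_diagonal_certificate_exists:
  assumes "\<And>k. kmin f m l g h \<le> k \<Longrightarrow> \<exists>\<xi> G. diagonal_certificate n m g k \<xi> G"
  shows "CTP n f m l g h"
  unfolding CTP_def
proof (intro allI impI)
  fix k assume "kmin f m l g h \<le> k"
  then obtain \<xi> G where cert: "diagonal_certificate n m g k \<xi> G"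
    using assms by blast
  define P where "P = diag_mat (\<lambda>x. sqrt (G (fst x) (snd x) (snd x)))"
  have G_ge: "1 \<le> G i \<alpha> \<alpha>" if "(i, \<alpha>) \<in> Jset n m g k" for i \<alpha>
    using cert that by (auto simp: diagonal_certificate_def Jset_eq_Sigma)
  have "pd_on (Jset n m g k) P"
    using G_ge by (intro pd_on_diagI) (force simp: P_def finite_Jset)+
  moreover have "trace_on (Jset n m g k) (mat_mult_on (Jset n m g k) (mat_mult_on (Jset n m g k) P (Dmat g y)) P) = \<xi>"
    if "y 0 = 1" for y
  proof -
    have "trace_on (Jset n m g k) (mat_mult_on (Jset n m g k) (mat_mult_on (Jset n m g k) P (Dmat g y)) P) =
        (\<Sum>i\<in>{0..m}. \<Sum>\<alpha>\<in>Nset n (k - pceil (gg g i)). (P (i, \<alpha>) (i, \<alpha>))\<^sup>2 * Mloc (gg g i) y \<alpha> \<alpha>)"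
      by (rule trace_conj_diag_Dmat) (simp add: P_def)
    also have "\<dots> = (\<Sum>i\<in>{0..m}. \<Sum>\<alpha>\<in>Nset n (k - pceil (gg g i)). G i \<alpha> \<alpha> * Mloc (gg g i) y \<alpha> \<alpha>)"
      using G_ge by (intro sum.cong refl) (force simp: P_def Jset_eq_Sigma)
    also have "\<dots> = \<xi>"
      using riesz_diagonal_certificate[OF cert, of y] that by simp
    finally show ?thesis .
  qed
  moreover have "0 < \<xi>"
    using cert by (simp add: diagonal_certificate_def)
  ultimately show "\<exists>a P. 0 < a \<and>
      (\<forall>x\<in>Jset n m g k. \<forall>z\<in>Jset n m g k. fst x \<noteq> fst z \<longrightarrow> P x z = 0) \<and> pd_on (Jset n m g k) P \<and>
      (\<forall>y. (\<forall>j\<in>{1..l}. \<forall>\<alpha>\<in>Nset n (k - pceil (h j)). \<forall>\<beta>\<in>Nset n (k - pceil (h j)). Mloc (h j) y \<alpha> \<beta> = 0) \<and>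
           y 0 = 1 \<longrightarrow>
           trace_on (Jset n m g k) (mat_mult_on (Jset n m g k) (mat_mult_on (Jset n m g k) P (Dmat g y)) P) = a)"
    by (intro exI[of _ \<xi>] exI[of _ P]) (auto simp: P_def diag_mat_def)
qed

lemma pceil_le_kmin: "i \<in> {1..m} \<Longrightarrow> pceil (g i) \<le> kmin f m l g h"
  unfolding kmin_def by (rule Max_ge) auto

theorem proposition1:
  fixes n m l r :: nat
    and f :: mpoly and g h :: "nat \<Rightarrow> mpoly"
    and Rlo Rup :: "nat \<Rightarrow> real" and T :: "nat \<Rightarrow> nat set"
  assumes f_vars: "in_vars n f"
    and h_vars: "\<forall>j\<in>{1..l}. in_vars n (h j)"
    and r_le: "2 * r \<le> m"
    and R_ann: "\<forall>i\<in>{1..r}. Rup i > Rlo i \<and> Rlo i > 0"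
    and R_ball: "\<forall>j\<in>{2*r+1..m}. Rup j > 0"
    and T_sub: "\<forall>i\<in>{1..r} \<union> {2*r+1..m}. T i \<subseteq> {1..n}"
    and T_cover: "(\<Union>i\<in>{1..r}. T i) \<union> (\<Union>j\<in>{2*r+1..m}. T j) = {1..n}"
    and g_low: "\<forall>i\<in>{1..r}. g i = sqnorm (T i) - pconst (Rlo i)"
    and g_up: "\<forall>i\<in>{1..r}. g (i + r) = pconst (Rup i) - sqnorm (T i)"
    and g_ball: "\<forall>j\<in>{2*r+1..m}. g j = pconst (Rup j) - sqnorm (T j)"
  shows "(\<forall>k \<ge> kmin f m l g h. LP_feasible n m l g h k) \<and> CTP n f m l g h"
proof -
  interpret annuli_and_balls n m r g Rlo Rup T
    using r_le R_ann R_ball T_sub T_cover g_low g_up g_ball by unfold_locales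
  have "\<exists>\<xi> G. diagonal_certificate n m g k \<xi> G" if "kmin f m l g h \<le> k" for k
    using diagonal_certificate_exists pceil_le_kmin that le_trans by blast
  then show ?thesis
    using LP_feasible_if_diagonal_certificate CTP_if_diagonal_certificate_exists by blast
qed

end
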